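(* Let $G=(V,E)$ be a finite graph satisfying the $CD\psi(n,-K)$ condition for some $n>0$, $K>0$, where $\psi:(0,+\infty)\to\mathbb R$ is a concave $C^1$ function with $\psi>0$ and $\psi'>0$ (and $\psi(1)D_w$ in the image of $\psi$). Let $u$ be a positive solution of the heat equation $\partial_t u=\Delta u$ on $V$. Then for all vertices and all $t>0$, $$\Gamma^{\psi}(u)-\psi'(1)\frac{\partial_{t}u}{u}\leq \frac{n}{2t}+\sqrt{nKC},\qquad C=D_{\mu}\left[\psi'(1)\left(\psi^{-1}(\psi(1)D_{w})-1\right)+\psi(1)\right].$$
   Context: Graphs: $G=(V,E)$ is a connected, locally finite graph; each edge $xy$ carries a weight $w_{xy}>0$ (possibly asymmetric), and $\mu:V\to(0,\infty)$ is a vertex measure; $y\sim x$ means $xy\in E$, $\deg(x)=\sum_{y\sim x}w_{xy}<\infty$, $D_\mu=\sup_{x}\deg(x)/\mu(x)$, $D_w=\sup_{x\sim y}\deg(x)/w_{xy}$. Laplacian: $\Delta f(x)=\frac{1}{\mu(x)}\sum_{y\sim x}w_{xy}(f(y)-f(x))$. For $\psi:(0,\infty)\to\mathbb R$ and $f:V\to(0,\infty)$: $\Delta^\psi f(x)=\Delta\big[\psi\big(\tfrac{f}{f(x)}\big)\big](x)$; for $C^1$ $\psi$, $\overline\psi(s)=\psi'(1)(s-1)-(\psi(s)-\psi(1))$ and $\Gamma^\psi f=\Delta^{\overline\psi}f$; $(\Omega^\psi f)(x)=\Delta\big[\psi'\big(\tfrac{f}{f(x)}\big)\tfrac{f}{f(x)}\big(\tfrac{\Delta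 f}{f}-\tfrac{\Delta f(x)}{f(x)}\big)\big](x)$; $2\Gamma_2^\psi(f)=\Omega^\psi f+\frac{\Delta f\,\Delta^\psi f}{f}-\frac{\Delta(f\Delta^\psi f)}{f}$. The graph satisfies $CD\psi(n,K)$ if for every $f:V\to(0,\infty)$ and every vertex, $\Gamma_2^\psi(f)\ge\frac1n(\Delta^\psi f)^2+K\Gamma^\psi(f)$. $\psi^{-1}$ is the inverse function of $\psi$. A positive solution of the heat equation on $U\subset V$ is $u:V\times[0,\infty)\to(0,\infty)$, continuously differentiable in $t$, with $\partial_t u=\Delta u$ at every $x\in U$, $t\ge0$; operators are applied to $u(\cdot,t)$ at each fixed time. *)

theory Defs
  imports "HOL-Analysis.Analysis"
begin

text \<open>A finite weighted graph on the finite vertex type 'a: E is the (undirected,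
loop-free) edge relation, w the (possibly asymmetric) positive edge weights,
mu the positive vertex measure.\<close>

definition weighted_graph :: "('a::finite \<Rightarrow> 'a \<Rightarrow> bool) \<Rightarrow> ('a \<Rightarrow> 'a \<Rightarrow> real) \<Rightarrow> ('a \<Rightarrow> real) \<Rightarrow> bool" where
  "weighted_graph E w mu \<longleftrightarrow>
     (\<forall>x y. E x y \<longrightarrow> E y x) \<and> (\<forall>x. \<not> E x x) \<and>
     (\<forall>x y. E x y \<longrightarrow> w x y > 0) \<and> (\<forall>x. mu x > 0) \<and>
     (\<forall>x y. (x, y) \<in> ({(a, b). E a b})\<^sup>*)"

definition deg :: "('a::finite \<Rightarrow> 'a \<Rightarrow> bool) \<Rightarrow> ('a \<Rightarrow> 'a \<Rightarrow> real) \<Rightarrow> 'a \<Rightarrow> real" where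
  "deg E w x = (\<Sum>y\<in>{y. E x y}. w x y)"

definition D_mu :: "('a::finite \<Rightarrow> 'a \<Rightarrow> bool) \<Rightarrow> ('a \<Rightarrow> 'a \<Rightarrow> real) \<Rightarrow> ('a \<Rightarrow> real) \<Rightarrow> real" where
  "D_mu E w mu = (SUP x. deg E w x / mu x)"

definition D_w :: "('a::finite \<Rightarrow> 'a \<Rightarrow> bool) \<Rightarrow> ('a \<Rightarrow> 'a \<Rightarrow> real) \<Rightarrow> real" where
  "D_w E w = Sup {deg E w x / w x y | x y. E x y}"

definition lap :: "('a::finite \<Rightarrow> 'a \<Rightarrow> bool) \<Rightarrow> ('a \<Rightarrow> 'a \<Rightarrow> real) \<Rightarrow> ('a \<Rightarrow> real) \<Rightarrow> ('a \<Rightarrow> real) \<Rightarrow> 'a \<Rightarrow> real" where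
  "lap E w mu f x = (1 / mu x) * (\<Sum>y\<in>{y. E x y}. w x y * (f y - f x))"

definition lap_psi :: "('a::finite \<Rightarrow> 'a \<Rightarrow> bool) \<Rightarrow> ('a \<Rightarrow> 'a \<Rightarrow> real) \<Rightarrow> ('a \<Rightarrow> real) \<Rightarrow> (real \<Rightarrow> real) \<Rightarrow> ('a \<Rightarrow> real) \<Rightarrow> 'a \<Rightarrow> real" where
  "lap_psi E w mu \<psi> f x = lap E w mu (\<lambda>y. \<psi> (f y / f x)) x"

definition psi_bar :: "(real \<Rightarrow> real) \<Rightarrow> real \<Rightarrow> real" where
  "psi_bar \<psi> s = deriv \<psi> 1 * (s - 1) - (\<psi> s - \<psi> 1)"

definition Gamma_psi :: "('a::finite \<Rightarrow> 'a \<Rightarrow> bool) \<Rightarrow> ('a \<Rightarrow> 'a \<Rightarrow> real) \<Rightarrow> ('a \<Rightarrow> real) \<Rightarrow> (real \<Rightarrow> real) \<Rightarrow> ('a \<Rightarrow> real) \<Rightarrow> 'a \<Rightarrow> real" where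
  "Gamma_psi E w mu \<psi> f x = lap_psi E w mu (psi_bar \<psi>) f x"

definition Omega_psi :: "('a::finite \<Rightarrow> 'a \<Rightarrow> bool) \<Rightarrow> ('a \<Rightarrow> 'a \<Rightarrow> real) \<Rightarrow> ('a \<Rightarrow> real) \<Rightarrow> (real \<Rightarrow> real) \<Rightarrow> ('a \<Rightarrow> real) \<Rightarrow> 'a \<Rightarrow> real" where
  "Omega_psi E w mu \<psi> f x =
     lap E w mu (\<lambda>y. deriv \<psi> (f y / f x) * (f y / f x) *
                      (lap E w mu f y / f y - lap E w mu f x / f x)) x"

definition Gamma2_psi :: "('a::finite \<Rightarrow> 'a \<Rightarrow> bool) \<Rightarrow> ('a \<Rightarrow> 'a \<Rightarrow> real) \<Rightarrow> ('a \<Rightarrow> real) \<Rightarrow> (real \<Rightarrow> real) \<Rightarrow> ('a \<Rightarrow> real) \<Rightarrow> 'a \<Rightarrow> real" where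
  "Gamma2_psi E w mu \<psi> f x =
     (Omega_psi E w mu \<psi> f x
      + lap E w mu f x * lap_psi E w mu \<psi> f x / f x
      - lap E w mu (\<lambda>y. f y * lap_psi E w mu \<psi> f y) x / f x) / 2"

definition CD_psi :: "('a::finite \<Rightarrow> 'a \<Rightarrow> bool) \<Rightarrow> ('a \<Rightarrow> 'a \<Rightarrow> real) \<Rightarrow> ('a \<Rightarrow> real) \<Rightarrow> (real \<Rightarrow> real) \<Rightarrow> real \<Rightarrow> real \<Rightarrow> bool" where
  "CD_psi E w mu \<psi> n K \<longleftrightarrow>
     (\<forall>f x. (\<forall>y. f y > 0) \<longrightarrow>
        Gamma2_psi E w mu \<psi> f x \<ge> (1 / n) * (lap_psi E w mu \<psi> f x)\<^sup>2 + K * Gamma_psi E w mu \<psi> f x)"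

definition heat_solution :: "('a::finite \<Rightarrow> 'a \<Rightarrow> bool) \<Rightarrow> ('a \<Rightarrow> 'a \<Rightarrow> real) \<Rightarrow> ('a \<Rightarrow> real) \<Rightarrow> ('a \<Rightarrow> real \<Rightarrow> real) \<Rightarrow> bool" where
  "heat_solution E w mu u \<longleftrightarrow>
     (\<forall>x t. t \<ge> 0 \<longrightarrow> u x t > 0) \<and>
     (\<forall>x t. t \<ge> 0 \<longrightarrow>
        ((\<lambda>s. u x s) has_real_derivative lap E w mu (\<lambda>y. u y t) x) (at t within {0..})) \<and>
     (\<forall>x. continuous_on {0..} (\<lambda>t. lap E w mu (\<lambda>y. u y t) x))"

end

theory Submission
  imports Defs
begin

text \<open>
  Li--Yau maximum principle. Along the heat flow \<Omega>^\<psi> u is the time derivative of \<Delta>^\<psi> u, and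
  \<Gamma>^\<psi> u - \<psi>'(1) \<partial>_t u / u = -\<Delta>^\<psi> u, so it suffices to bound F = -t \<Delta>^\<psi> u on V \<times> [0,T].
  At a positive maximum (x0,t0) of F, \<Delta>^\<psi> u(\<cdot>,t0) is minimal at x0, which makes the two
  non-\<Omega> terms of 2\<Gamma>_2^\<psi> nonpositive, and \<partial>_t F \<ge> 0 gives t0 \<Omega>^\<psi> u \<le> -\<Delta>^\<psi> u. Moreover
  \<Delta>^\<psi> u(x0) \<le> 0 forces \<psi>(u(y)/u(x0)) \<le> \<psi>(1) D_w for every neighbour y, hence
  u(y)/u(x0) \<le> \<psi>^{-1}(\<psi>(1) D_w) and \<Gamma>^\<psi> u(x0) \<le> C. Then CD\<psi>(n,-K) yields
  2F^2 \<le> nF + 2 t0^2 nKC, i.e. F \<le> n/2 + t0 \<surd>(nKC).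
\<close>

lemma strict_mono_on_deriv_pos:
  fixes \<psi> :: "real \<Rightarrow> real"
  assumes diff: "\<forall>s>0. \<psi> differentiable (at s)" and dpos: "\<forall>s>0. deriv \<psi> s > 0"
  shows "strict_mono_on {0<..} \<psi>"
proof (rule strict_mono_onI)
  fix a b :: real assume "a \<in> {0<..}" "a < b"
  then have "\<exists>y. DERIV \<psi> s :> y \<and> y > 0" if "a \<le> s" for s
  proof -
    have "s > 0" using that \<open>a \<in> {0<..}\<close> by simp
    then show ?thesis
      using diff dpos DERIV_deriv_iff_real_differentiable by blast
  qed
  then show "\<psi> a < \<psi> b" by (rule DERIV_pos_imp_increasing[OF \<open>a < b\<close>]) simp
qed

lemma le_the_inv_into_strict_mono_on:
  fixes f :: "'a::linorder \<Rightarrow> 'b::linorder"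
  assumes mono: "strict_mono_on A f" and c: "c \<in> f ` A" and r: "r \<in> A" "f r \<le> c"
  shows "r \<le> the_inv_into A f c"
proof -
  have inj: "inj_on f A" by (rule strict_mono_on_imp_inj_on[OF mono])
  have "f r \<le> f (the_inv_into A f c)" unfolding f_the_inv_into_f[OF inj c] by (rule r(2))
  then show ?thesis
    by (subst (asm) strict_mono_on_less_eq[OF mono r(1) the_inv_into_into[OF inj c order.refl]])
qed

lemma weighted_graph_weight_pos:
  "weighted_graph E w mu \<Longrightarrow> E x y \<Longrightarrow> 0 < w x y"
  by (simp add: weighted_graph_def)

lemma weighted_graph_measure_pos: "weighted_graph E w mu \<Longrightarrow> 0 < mu x"
  by (simp add: weighted_graph_def)

lemma deg_nonneg:
  assumes "weighted_graph E w mu"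
  shows "0 \<le> deg E w x"
  unfolding deg_def
  by (rule sum_nonneg) (simp add: less_imp_le weighted_graph_weight_pos[OF assms])

lemma weight_le_deg:
  assumes "weighted_graph E w mu" and "E x y"
  shows "w x y \<le> deg E w x"
  unfolding deg_def using assms(2)
  by (intro member_le_sum) (simp_all add: less_imp_le weighted_graph_weight_pos[OF assms(1)])

lemma le_D_w:
  assumes "E x y"
  shows "deg E w x / w x y \<le> D_w E w"
proof -
  have "{deg E w x / w x y |x y. E x y} = (\<lambda>(x, y). deg E w x / w x y) ` {(x, y). E x y}"
    by auto
  then have "finite {deg E w x / w x y |x y. E x y}" by simp
  then show ?thesis unfolding D_w_def using assms by (intro cSup_upper bdd_above_finite) auto
qed

lemma one_le_D_w:
  assumes "weighted_graph E w mu" and "E x y"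
  shows "1 \<le> D_w E w"
proof -
  have "w x y > 0" by (rule weighted_graph_weight_pos[OF assms])
  then have "1 \<le> deg E w x / w x y" using weight_le_deg[OF assms] by simp
  also have "\<dots> \<le> D_w E w" by (rule le_D_w[of E x y w, OF \<open>E x y\<close>])
  finally show ?thesis .
qed

lemma le_D_mu: "deg E w x / mu x \<le> D_mu E w mu"
  unfolding D_mu_def by (rule cSUP_upper) (auto intro: bdd_above_finite)

lemma D_mu_nonneg:
  assumes G: "weighted_graph E w mu"
  shows "0 \<le> D_mu E w mu"
proof -
  have "0 \<le> deg E w x / mu x" for x
    using deg_nonneg[OF G] weighted_graph_measure_pos[OF G] by (simp add: less_imp_le)
  then show ?thesis using le_D_mu[of E w undefined mu] by (rule order_trans)
qed

definition li_yau_constant ::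
    "('a::finite \<Rightarrow> 'a \<Rightarrow> bool) \<Rightarrow> ('a \<Rightarrow> 'a \<Rightarrow> real) \<Rightarrow> ('a \<Rightarrow> real) \<Rightarrow> (real \<Rightarrow> real) \<Rightarrow> real" where
  "li_yau_constant E w mu \<psi> =
     D_mu E w mu * (deriv \<psi> 1 * (the_inv_into {0<..} \<psi> (\<psi> 1 * D_w E w) - 1) + \<psi> 1)"

text \<open>Without edges D_mu = 0, so the junk value Sup {} of D_w does not matter.\<close>
lemma li_yau_constant_nonneg:
  fixes \<psi> :: "real \<Rightarrow> real"
  assumes G: "weighted_graph E w mu"
    and diff: "\<forall>s>0. \<psi> differentiable (at s)"
    and pos: "\<forall>s>0. \<psi> s > 0" and dpos: "\<forall>s>0. deriv \<psi> s > 0"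
    and img: "\<psi> 1 * D_w E w \<in> \<psi> ` {0<..}"
  shows "0 \<le> li_yau_constant E w mu \<psi>"
proof (cases "\<exists>a b. E a b")
  case True
  then obtain a b where "E a b" by blast
  then have "\<psi> 1 \<le> \<psi> 1 * D_w E w"
    using one_le_D_w[OF G \<open>E a b\<close>] pos[rule_format, of 1] by simp
  then have "1 \<le> the_inv_into {0<..} \<psi> (\<psi> 1 * D_w E w)"
    by (intro le_the_inv_into_strict_mono_on[OF strict_mono_on_deriv_pos[OF diff dpos] img]) simp_all
  then show ?thesis
    unfolding li_yau_constant_def
    using D_mu_nonneg[OF G] pos[rule_format, of 1] dpos[rule_format, of 1] by simp
next
  case False
  then have "\<And>x. deg E w x = 0" by (simp add: deg_def)
  then have "D_mu E w mu = 0" by (simp add: D_mu_def)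
  then show ?thesis by (simp add: li_yau_constant_def)
qed
lemma psi_ratio_le_of_lap_psi_nonpos:
  fixes \<psi> :: "real \<Rightarrow> real"
  assumes G: "weighted_graph E w mu" and pos: "\<forall>s>0. \<psi> s > 0"
    and fp: "\<forall>y. f y > 0" and H: "lap_psi E w mu \<psi> f x \<le> 0" and y: "E x y"
  shows "\<psi> (f y / f x) \<le> \<psi> 1 * D_w E w"
proof -
  have fx: "f x / f x = 1" using fp by (simp add: less_imp_neq[symmetric])
  have "(\<Sum>z\<in>{z. E x z}. w x z * (\<psi> (f z / f x) - \<psi> 1)) \<le> 0"
    using H weighted_graph_measure_pos[OF G, of x]
    unfolding lap_psi_def lap_def fx by (simp add: divide_le_0_iff)
  then have sum_le: "(\<Sum>z\<in>{z. E x z}. w x z * \<psi> (f z / f x)) \<le> \<psi> 1 * deg E w x"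
    by (simp add: deg_def right_diff_distrib sum_subtractf sum_distrib_left mult.commute)
  have "w x y * \<psi> (f y / f x) \<le> (\<Sum>z\<in>{z. E x z}. w x z * \<psi> (f z / f x))"
    using y pos fp weighted_graph_weight_pos[OF G]
    by (intro member_le_sum) (simp_all add: less_imp_le)
  with sum_le have "\<psi> (f y / f x) \<le> \<psi> 1 * (deg E w x / w x y)"
    using weighted_graph_weight_pos[OF G y] by (simp add: field_simps)
  also have "\<dots> \<le> \<psi> 1 * D_w E w"
    by (rule mult_left_mono[OF le_D_w[of E x y w, OF y]]) (use pos in \<open>simp add: less_imp_le\<close>)
  finally show ?thesis .
qed

lemma psi_bar_le:
  assumes "s \<le> R" "\<psi> s > 0" "deriv \<psi> 1 \<ge> 0"
  shows "psi_bar \<psi> s \<le> deriv \<psi> 1 * (R - 1) + \<psi> 1"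
proof -
  have "deriv \<psi> 1 * (s - 1) \<le> deriv \<psi> 1 * (R - 1)" using assms by (simp add: mult_left_mono)
  then show ?thesis unfolding psi_bar_def using assms(2) by linarith
qed

lemma Gamma_psi_eq_sum:
  assumes "f x \<noteq> 0"
  shows "Gamma_psi E w mu \<psi> f x = (1 / mu x) * (\<Sum>y\<in>{y. E x y}. w x y * psi_bar \<psi> (f y / f x))"
  using assms by (simp add: Gamma_psi_def lap_psi_def lap_def psi_bar_def)

lemma Gamma_psi_le_li_yau_constant:
  fixes \<psi> :: "real \<Rightarrow> real"
  assumes G: "weighted_graph E w mu"
    and diff: "\<forall>s>0. \<psi> differentiable (at s)"
    and pos: "\<forall>s>0. \<psi> s > 0" and dpos: "\<forall>s>0. deriv \<psi> s > 0"
    and img: "\<psi> 1 * D_w E w \<in> \<psi> ` {0<..}"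
    and fp: "\<forall>y. f y > 0" and H: "lap_psi E w mu \<psi> f x \<le> 0"
  shows "Gamma_psi E w mu \<psi> f x \<le> li_yau_constant E w mu \<psi>"
proof (cases "\<exists>b. E x b")
  case False
  then have "Gamma_psi E w mu \<psi> f x = 0" by (simp add: Gamma_psi_def lap_psi_def lap_def)
  then show ?thesis using li_yau_constant_nonneg[OF G diff pos dpos img] by simp
next
  case True
  then obtain b where "E x b" by blast
  define R where "R = the_inv_into {0<..} \<psi> (\<psi> 1 * D_w E w)"
  define B where "B = deriv \<psi> 1 * (R - 1) + \<psi> 1"
  have mono: "strict_mono_on {0<..} \<psi>" by (rule strict_mono_on_deriv_pos[OF diff dpos])
  have ratio_le: "f y / f x \<le> R" if "E x y" for y
    unfolding R_def using fp psi_ratio_le_of_lap_psi_nonpos[OF G pos fp H that]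
    by (intro le_the_inv_into_strict_mono_on[OF mono img]) simp_all
  have "\<psi> 1 \<le> \<psi> 1 * D_w E w"
    using one_le_D_w[OF G \<open>E x b\<close>] pos[rule_format, of 1] by simp
  then have "1 \<le> R"
    unfolding R_def by (intro le_the_inv_into_strict_mono_on[OF mono img]) simp_all
  then have B0: "0 \<le> B" unfolding B_def using pos dpos by (simp add: less_imp_le)
  have "(\<Sum>y\<in>{y. E x y}. w x y * psi_bar \<psi> (f y / f x)) \<le> (\<Sum>y\<in>{y. E x y}. w x y * B)"
  proof (rule sum_mono)
    fix y assume "y \<in> {y. E x y}"
    then have "E x y" by simp
    have "psi_bar \<psi> (f y / f x) \<le> B"
      unfolding B_def using fp pos dpos ratio_le[OF \<open>E x y\<close>] by (intro psi_bar_le) (simp_all add: less_imp_le)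
    then show "w x y * psi_bar \<psi> (f y / f x) \<le> w x y * B"
      using weighted_graph_weight_pos[OF G \<open>E x y\<close>] by simp
  qed
  then have "Gamma_psi E w mu \<psi> f x \<le> (1 / mu x) * (\<Sum>y\<in>{y. E x y}. w x y * B)"
    unfolding Gamma_psi_eq_sum[of f x, OF less_imp_neq[OF fp[rule_format, of x], symmetric]]
    using weighted_graph_measure_pos[OF G, of x] by (simp add: divide_right_mono)
  also have "\<dots> = (deg E w x / mu x) * B" by (simp add: deg_def sum_distrib_right)
  also have "\<dots> \<le> D_mu E w mu * B" by (rule mult_right_mono[OF le_D_mu B0])
  finally show ?thesis unfolding li_yau_constant_def B_def R_def .
qed

lemma Gamma_psi_eq_lap:
  assumes "f x \<noteq> 0" "mu x \<noteq> 0"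
  shows "Gamma_psi E w mu \<psi> f x = deriv \<psi> 1 * lap E w mu f x / f x - lap_psi E w mu \<psi> f x"
proof -
  have split: "w x y * (psi_bar \<psi> (f y / f x) - psi_bar \<psi> (f x / f x))
     = (deriv \<psi> 1 / f x) * (w x y * (f y - f x)) - w x y * (\<psi> (f y / f x) - \<psi> (f x / f x))"
    for y using assms by (simp add: psi_bar_def field_simps)
  show ?thesis
    unfolding Gamma_psi_def lap_psi_def lap_def split sum_subtractf sum_distrib_left[symmetric]
    using assms by (simp add: field_simps)
qed

lemma lap_mult_ge_of_min:
  assumes G: "weighted_graph E w mu" and fp: "\<forall>y. f y > 0" and hmin: "\<forall>y. h x \<le> h y"
  shows "h x * lap E w mu f x \<le> lap E w mu (\<lambda>y. f y * h y) x"
proof -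
  have split: "w x y * (f y * h y - f x * h x) = w x y * f y * (h y - h x) + h x * (w x y * (f y - f x))"
    for y by (simp add: algebra_simps)
  have "lap E w mu (\<lambda>y. f y * h y) x
      = (1 / mu x) * (\<Sum>y\<in>{y. E x y}. w x y * f y * (h y - h x)) + h x * lap E w mu f x"
    unfolding lap_def split sum.distrib sum_distrib_left[symmetric] by (simp add: algebra_simps)
  moreover have "0 \<le> (\<Sum>y\<in>{y. E x y}. w x y * f y * (h y - h x))"
    using fp hmin weighted_graph_weight_pos[OF G] by (intro sum_nonneg) (simp add: less_imp_le)
  ultimately show ?thesis using weighted_graph_measure_pos[OF G, of x] by simp
qed

lemma Gamma2_psi_le_Omega_psi_of_min:
  assumes G: "weighted_graph E w mu" and fp: "\<forall>y. f y > 0"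
    and hmin: "\<forall>y. lap_psi E w mu \<psi> f x \<le> lap_psi E w mu \<psi> f y"
  shows "2 * Gamma2_psi E w mu \<psi> f x \<le> Omega_psi E w mu \<psi> f x"
proof -
  have "lap E w mu f x * lap_psi E w mu \<psi> f x \<le> lap E w mu (\<lambda>y. f y * lap_psi E w mu \<psi> f y) x"
    using lap_mult_ge_of_min[OF G fp hmin] by (simp add: mult.commute)
  then have "lap E w mu f x * lap_psi E w mu \<psi> f x / f x
      \<le> lap E w mu (\<lambda>y. f y * lap_psi E w mu \<psi> f y) x / f x"
    using fp by (simp add: divide_right_mono less_imp_le)
  then show ?thesis unfolding Gamma2_psi_def by simp
qed

lemma lap_psi_sq_le_Omega_psi_of_min:
  fixes \<psi> :: "real \<Rightarrow> real"
  assumes G: "weighted_graph E w mu" and K: "K \<ge> 0" and CD: "CD_psi E w mu \<psi> n (- K)"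
    and diff: "\<forall>s>0. \<psi> differentiable (at s)"
    and pos: "\<forall>s>0. \<psi> s > 0" and dpos: "\<forall>s>0. deriv \<psi> s > 0"
    and img: "\<psi> 1 * D_w E w \<in> \<psi> ` {0<..}"
    and fp: "\<forall>y. f y > 0" and H: "lap_psi E w mu \<psi> f x \<le> 0"
    and hmin: "\<forall>y. lap_psi E w mu \<psi> f x \<le> lap_psi E w mu \<psi> f y"
  shows "(1 / n) * (lap_psi E w mu \<psi> f x)\<^sup>2 - K * li_yau_constant E w mu \<psi>
           \<le> Omega_psi E w mu \<psi> f x / 2"
proof -
  have "(1 / n) * (lap_psi E w mu \<psi> f x)\<^sup>2 - K * Gamma_psi E w mu \<psi> f x \<le> Gamma2_psi E w mu \<psi> f x"
    using CD fp unfolding CD_psi_def by simp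
  moreover have "K * Gamma_psi E w mu \<psi> f x \<le> K * li_yau_constant E w mu \<psi>"
    using Gamma_psi_le_li_yau_constant[OF G diff pos dpos img fp H] K by (rule mult_left_mono)
  ultimately show ?thesis using Gamma2_psi_le_Omega_psi_of_min[OF G fp hmin] by linarith
qed

lemma has_real_derivative_comp_quotient:
  fixes \<psi> g h :: "real \<Rightarrow> real"
  assumes g: "(g has_real_derivative g') (at t within S)" and h: "(h has_real_derivative h') (at t within S)"
    and nz: "g t \<noteq> 0" "h t \<noteq> 0" and diff: "\<psi> differentiable (at (g t / h t))"
  shows "((\<lambda>s. \<psi> (g s / h s)) has_real_derivative
           deriv \<psi> (g t / h t) * (g t / h t) * (g' / g t - h' / h t)) (at t within S)"
proof -
  have "((\<lambda>s. \<psi> (g s / h s)) has_real_derivative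
      deriv \<psi> (g t / h t) * ((g' * h t - g t * h') / (h t * h t))) (at t within S)"
    using DERIV_chain2[OF diff[unfolded DERIV_deriv_iff_real_differentiable[symmetric]]
        DERIV_divide[OF g h nz(2)]] .
  moreover have "(g' * h t - g t * h') / (h t * h t) = (g t / h t) * (g' / g t - h' / h t)"
    using nz by (simp add: field_simps)
  ultimately show ?thesis by (simp add: mult.assoc)
qed

lemma has_real_derivative_lap:
  assumes "\<And>y. ((\<lambda>s. F s y) has_real_derivative F' y) (at t within S)"
  shows "((\<lambda>s. lap E w mu (F s) x) has_real_derivative lap E w mu F' x) (at t within S)"
  unfolding lap_def by (intro DERIV_cmult DERIV_sum DERIV_diff assms)

lemma lap_psi_heat_has_derivative:
  fixes \<psi> :: "real \<Rightarrow> real"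
  assumes heat: "heat_solution E w mu u" and diff: "\<forall>s>0. \<psi> differentiable (at s)"
    and t: "t \<ge> 0"
  shows "((\<lambda>s. lap_psi E w mu \<psi> (\<lambda>y. u y s) x) has_real_derivative
            Omega_psi E w mu \<psi> (\<lambda>y. u y t) x) (at t within {0..})"
proof -
  have up: "u y t > 0" for y using heat t by (simp add: heat_solution_def)
  have ud: "((\<lambda>s. u y s) has_real_derivative lap E w mu (\<lambda>z. u z t) y) (at t within {0..})" for y
    using heat t by (simp add: heat_solution_def)
  have ratio: "((\<lambda>s. \<psi> (u y s / u x s)) has_real_derivative
      deriv \<psi> (u y t / u x t) * (u y t / u x t) *
        (lap E w mu (\<lambda>z. u z t) y / u y t - lap E w mu (\<lambda>z. u z t) x / u x t))
      (at t within {0..})" for y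
    using up diff by (intro has_real_derivative_comp_quotient[OF ud ud]) (simp_all add: less_imp_neq[symmetric])
  show ?thesis
    unfolding lap_psi_def Omega_psi_def by (rule has_real_derivative_lap[OF ratio])
qed

lemma has_real_derivative_nonneg_of_left_max:
  fixes f :: "real \<Rightarrow> real"
  assumes der: "(f has_real_derivative l) (at t within S)" and "a < t" "{a..t} \<subseteq> S"
    and max: "\<forall>s\<in>{a..t}. f s \<le> f t"
  shows "0 \<le> l"
proof (rule ccontr)
  assume "\<not> 0 \<le> l"
  then obtain d where d: "d > 0" "\<forall>h>0. t - h \<in> S \<longrightarrow> h < d \<longrightarrow> f t < f (t - h)"
    using has_real_derivative_neg_dec_left[OF der] by force
  define h where "h = min (d / 2) (t - a)"
  have "h > 0" "h < d" "t - h \<in> {a..t}" using d \<open>a < t\<close> unfolding h_def by auto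
  then show False using d(2) max \<open>{a..t} \<subseteq> S\<close> by force
qed

lemma finite_family_attains_max:
  fixes F :: "'a::finite \<Rightarrow> real \<Rightarrow> real"
  assumes "a \<le> b" and cont: "\<And>y. continuous_on {a..b} (F y)"
  obtains x0 t0 where "t0 \<in> {a..b}" "\<And>y s. s \<in> {a..b} \<Longrightarrow> F y s \<le> F x0 t0"
proof -
  have "\<forall>y. \<exists>t\<in>{a..b}. \<forall>s\<in>{a..b}. F y s \<le> F y t"
    using continuous_attains_sup[OF compact_Icc _ cont] \<open>a \<le> b\<close> by auto
  then obtain tt where tt: "\<And>y. tt y \<in> {a..b}" "\<And>y s. s \<in> {a..b} \<Longrightarrow> F y s \<le> F y (tt y)"
    by metis
  have "Max (range (\<lambda>y. F y (tt y))) \<in> range (\<lambda>y. F y (tt y))" by (rule Max_in) simp_all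
  then obtain x0 where "F x0 (tt x0) = Max (range (\<lambda>y. F y (tt y)))" by (metis imageE)
  then have "F y (tt y) \<le> F x0 (tt x0)" for y by simp
  then show ?thesis using that[OF tt(1)] tt(2) order_trans by metis
qed

lemma quadratic_le_imp_le:
  fixes a n q :: real
  assumes "0 \<le> n" "0 \<le> q" "2 * a\<^sup>2 \<le> n * a + 2 * q\<^sup>2"
  shows "a \<le> n / 2 + q"
proof (rule ccontr)
  assume "\<not> a \<le> n / 2 + q"
  then have "2 * q\<^sup>2 < a * (2 * a - n)"
    using assms(1,2) mult_strict_mono[of "2 * q" "2 * a - n" q a] by (simp add: power2_eq_square mult.commute)
  then show False using assms(3) by (simp add: algebra_simps power2_eq_square)
qed

lemma li_yau_at_space_time_max:
  fixes \<psi> :: "real \<Rightarrow> real"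
  assumes G: "weighted_graph E w mu" and n: "n > 0" and K: "K \<ge> 0"
    and CD: "CD_psi E w mu \<psi> n (- K)"
    and diff: "\<forall>s>0. \<psi> differentiable (at s)"
    and pos: "\<forall>s>0. \<psi> s > 0" and dpos: "\<forall>s>0. deriv \<psi> s > 0"
    and img: "\<psi> 1 * D_w E w \<in> \<psi> ` {0<..}"
    and heat: "heat_solution E w mu u"
    and t0: "t0 > 0" and neg: "lap_psi E w mu \<psi> (\<lambda>z. u z t0) x0 \<le> 0"
    and max: "\<forall>y. \<forall>s\<in>{0..t0}.
      - s * lap_psi E w mu \<psi> (\<lambda>z. u z s) y \<le> - t0 * lap_psi E w mu \<psi> (\<lambda>z. u z t0) x0"
  shows "- t0 * lap_psi E w mu \<psi> (\<lambda>z. u z t0) x0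
           \<le> n / 2 + t0 * sqrt (n * K * li_yau_constant E w mu \<psi>)"
proof -
  define H where "H s y = lap_psi E w mu \<psi> (\<lambda>z. u z s) y" for s y
  define Om where "Om = Omega_psi E w mu \<psi> (\<lambda>z. u z t0) x0"
  define C where "C = li_yau_constant E w mu \<psi>"
  have C: "0 \<le> C" unfolding C_def by (rule li_yau_constant_nonneg[OF G diff pos dpos img])
  have hmin: "\<forall>y. H t0 x0 \<le> H t0 y"
  proof
    fix y
    have "t0 * H t0 x0 \<le> t0 * H t0 y" using max t0 unfolding H_def by simp
    then show "H t0 x0 \<le> H t0 y" using t0 by simp
  qed
  have fp: "\<forall>y. u y t0 > 0" using heat t0 by (simp add: heat_solution_def)
  have curvature: "(1 / n) * (H t0 x0)\<^sup>2 - K * C \<le> Om / 2"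
    using lap_psi_sq_le_Omega_psi_of_min[OF G K CD diff pos dpos img fp neg hmin[unfolded H_def]]
    unfolding Om_def C_def H_def .
  have "((\<lambda>s. - s * H s x0) has_real_derivative (-1) * H t0 x0 + Om * (- t0)) (at t0 within {0..})"
    unfolding H_def Om_def
    by (intro DERIV_mult DERIV_minus DERIV_ident lap_psi_heat_has_derivative[OF heat diff]) (use t0 in simp)
  moreover have "\<forall>s\<in>{0..t0}. - s * H s x0 \<le> - t0 * H t0 x0" using max unfolding H_def by blast
  ultimately have "0 \<le> (-1) * H t0 x0 + Om * (- t0)"
    using t0 by (intro has_real_derivative_nonneg_of_left_max[of _ _ t0 "{0..}" 0]) auto
  then have time: "t0 * Om \<le> - H t0 x0" by (simp add: algebra_simps)
  define a where "a = - t0 * H t0 x0"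
  have "2 * t0\<^sup>2 * ((1 / n) * (H t0 x0)\<^sup>2 - K * C) \<le> 2 * t0\<^sup>2 * (Om / 2)"
    using curvature by (intro mult_left_mono) simp_all
  also have "\<dots> = t0 * (t0 * Om)" by (simp add: power2_eq_square)
  also have "\<dots> \<le> t0 * (- H t0 x0)" using time t0 by (intro mult_left_mono) simp_all
  also have "\<dots> = a" unfolding a_def by simp
  finally have "2 * a\<^sup>2 \<le> n * a + 2 * (t0 * sqrt (n * K * C))\<^sup>2"
    using n K C unfolding a_def by (simp add: power_mult_distrib field_simps)
  then have "a \<le> n / 2 + t0 * sqrt (n * K * C)"
    by (rule quadratic_le_imp_le[rotated 2]) (use n K C t0 in simp_all)
  then show ?thesis unfolding a_def H_def C_def .
qed

lemma li_yau_lap_psi_heat: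
  fixes \<psi> :: "real \<Rightarrow> real"
  assumes G: "weighted_graph E w mu" and n: "n > 0" and K: "K \<ge> 0"
    and CD: "CD_psi E w mu \<psi> n (- K)"
    and diff: "\<forall>s>0. \<psi> differentiable (at s)"
    and pos: "\<forall>s>0. \<psi> s > 0" and dpos: "\<forall>s>0. deriv \<psi> s > 0"
    and img: "\<psi> 1 * D_w E w \<in> \<psi> ` {0<..}"
    and heat: "heat_solution E w mu u" and T: "T > 0"
  shows "- T * lap_psi E w mu \<psi> (\<lambda>z. u z T) x \<le> n / 2 + T * sqrt (n * K * li_yau_constant E w mu \<psi>)"
proof -
  define F where "F y s = - s * lap_psi E w mu \<psi> (\<lambda>z. u z s) y" for y s
  define q where "q = sqrt (n * K * li_yau_constant E w mu \<psi>)"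
  have q: "0 \<le> q"
    unfolding q_def using n K li_yau_constant_nonneg[OF G diff pos dpos img] by simp
  have Fder: "((F y) has_real_derivative
      (-1) * lap_psi E w mu \<psi> (\<lambda>z. u z s) y + Omega_psi E w mu \<psi> (\<lambda>z. u z s) y * (- s))
      (at s within {0..})" if "s \<in> {0..}" for y s
    unfolding F_def using that
    by (intro DERIV_mult DERIV_minus DERIV_ident lap_psi_heat_has_derivative[OF heat diff]) simp
  have "continuous_on {0..} (F y)" for y by (rule DERIV_continuous_on, rule Fder)
  then have cont: "continuous_on {0..T} (F y)" for y by (rule continuous_on_subset) auto
  obtain x0 t0 where t0: "t0 \<in> {0..T}" and max: "\<And>y s. s \<in> {0..T} \<Longrightarrow> F y s \<le> F x0 t0"
    by (rule finite_family_attains_max[of 0 T F, OF less_imp_le[OF T] cont]) blast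
  have "F x0 t0 \<le> n / 2 + t0 * q"
  proof (cases "F x0 t0 \<le> 0")
    case True
    moreover have "0 \<le> t0 * q" using t0 q by simp
    ultimately show ?thesis using n by linarith
  next
    case False
    then have "t0 > 0" using t0 by (cases "t0 = 0") (auto simp: F_def)
    moreover have "lap_psi E w mu \<psi> (\<lambda>z. u z t0) x0 \<le> 0"
      using False \<open>t0 > 0\<close> unfolding F_def by (simp add: zero_le_mult_iff)
    moreover have "\<forall>y. \<forall>s\<in>{0..t0}. F y s \<le> F x0 t0" using max t0 by simp
    ultimately show ?thesis
      unfolding F_def q_def by (rule li_yau_at_space_time_max[OF G n K CD diff pos dpos img heat])
  qed
  also have "\<dots> \<le> n / 2 + T * q" using t0 q by (simp add: mult_right_mono)
  finally show ?thesis using max[of T x] T unfolding F_def q_def by simp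
qed

lemma deriv_heat_solution:
  assumes heat: "heat_solution E w mu u" and t: "t > 0"
  shows "deriv (\<lambda>s. u x s) t = lap E w mu (\<lambda>y. u y t) x"
proof (rule DERIV_imp_deriv)
  have "((\<lambda>s. u x s) has_real_derivative lap E w mu (\<lambda>y. u y t) x) (at t within {0..})"
    using heat t by (simp add: heat_solution_def)
  then have "((\<lambda>s. u x s) has_real_derivative lap E w mu (\<lambda>y. u y t) x) (at t within {0<..})"
    by (rule has_field_derivative_subset) auto
  then show "((\<lambda>s. u x s) has_real_derivative lap E w mu (\<lambda>y. u y t) x) (at t)"
    using at_within_open[of t "{0<..}"] t by simp
qed

theorem mainTheorem6:
  fixes E :: "'a::finite \<Rightarrow> 'a \<Rightarrow> bool" and w :: "'a \<Rightarrow> 'a \<Rightarrow> real" and mu :: "'a \<Rightarrow> real"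
    and \<psi> :: "real \<Rightarrow> real" and u :: "'a \<Rightarrow> real \<Rightarrow> real" and n K :: real
  assumes G: "weighted_graph E w mu"
    and n: "n > 0" and K: "K > 0"
    and CD: "CD_psi E w mu \<psi> n (- K)"
    and concave: "concave_on {0<..} \<psi>"
    and diff: "\<forall>s>0. \<psi> differentiable (at s)"
    and C1: "continuous_on {0<..} (deriv \<psi>)"
    and pos: "\<forall>s>0. \<psi> s > 0"
    and dpos: "\<forall>s>0. deriv \<psi> s > 0"
    and img: "\<psi> 1 * D_w E w \<in> \<psi> ` {0<..}"
    and heat: "heat_solution E w mu u"
  shows "\<forall>x. \<forall>t>0.
     Gamma_psi E w mu \<psi> (\<lambda>y. u y t) x - deriv \<psi> 1 * (deriv (\<lambda>s. u x s) t / u x t)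
       \<le> n / (2 * t) + sqrt (n * K *
            (D_mu E w mu * (deriv \<psi> 1 * (the_inv_into {0<..} \<psi> (\<psi> 1 * D_w E w) - 1) + \<psi> 1)))"
proof (intro allI impI)
  fix x :: 'a and t :: real
  assume t: "t > 0"
  have "u x t > 0" using heat t by (simp add: heat_solution_def)
  then have "Gamma_psi E w mu \<psi> (\<lambda>y. u y t) x - deriv \<psi> 1 * (deriv (\<lambda>s. u x s) t / u x t)
      = - lap_psi E w mu \<psi> (\<lambda>y. u y t) x"
    using weighted_graph_measure_pos[OF G, of x]
    by (simp add: Gamma_psi_eq_lap deriv_heat_solution[OF heat t])
  also have "\<dots> \<le> n / (2 * t) + sqrt (n * K * li_yau_constant E w mu \<psi>)"
    using li_yau_lap_psi_heat[OF G n less_imp_le[OF K] CD diff pos dpos img heat t, of x] t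
    by (simp add: field_simps)
  finally show "Gamma_psi E w mu \<psi> (\<lambda>y. u y t) x - deriv \<psi> 1 * (deriv (\<lambda>s. u x s) t / u x t)
       \<le> n / (2 * t) + sqrt (n * K *
            (D_mu E w mu * (deriv \<psi> 1 * (the_inv_into {0<..} \<psi> (\<psi> 1 * D_w E w) - 1) + \<psi> 1)))"
    unfolding li_yau_constant_def .
qed

end
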